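(* In the D-RR setting under the nonconvex assumptions, let $\alpha_t=\alpha$ for all $t$ with $0<\alpha\le\min\big\{\frac{1}{2\sqrt6\,mL},\frac{1-\rho_w^2}{4\sqrt6\,L}\big\}$. Then for every epoch $t$ (and every realization of the permutations), with $\mathcal L_t:=\frac1n\sum_{\ell=0}^{m-1}\|\mathbf x_t^\ell-\mathbf 1(\bar x_t^\ell)^\intercal\|^2+\sum_{\ell=0}^{m-1}\|\bar x_t^\ell-\bar x_t^0\|^2$, $$\mathcal L_t\le\frac{4}{n(1-\rho_w^2)}\|\mathbf x_t^0-\mathbf 1(\bar x_t^0)^\intercal\|^2+\frac{6m^2\alpha^2B^2(m+4)}{(1-\rho_w^2)^2}+\frac{6\alpha^2m(4+m^2)}{(1-\rho_w^2)^2}\|\nabla f(\bar x_t^0)\|^2+\frac{12m^2\alpha^2A(4+m)}{1-\rho_w^2}\big(f(\bar x_t^0)-\bar f\big),$$ and $$\|\mathbf x_{t+1}^0-\mathbf 1(\bar x_{t+1}^0)^\intercal\|^2\le\Big(\frac{1+\rho_w^2}{2}\Big)^m\|\mathbf x_t^0-\mathbf 1(\bar x_t^0)^\intercal\|^2+\frac{12\alpha^2nL^2}{1-\rho_w^2}\mathcal L_t+\frac{6\alpha^2mnB^2}{1-\rho_w^2}+\frac{6\alpha^2mn}{1-\rho_w^2}\|\nabla f(\bar x_t^0)\|^2+\frac{12A\alpha^2mn}{1-\rho_w^2}\big(f(\bar x_t^0)-\bar f\big).$$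
   Context: D-RR setting. Let $n,m,p\ge1$ be integers and $[k]=\{1,\dots,k\}$. For $i\in[n]$, $\ell\in[m]$ let $f_{i,\ell}:\mathbb{R}^p\to\mathbb{R}$ be differentiable; $f_i:=\frac1m\sum_{\ell=1}^m f_{i,\ell}$, $f:=\frac1n\sum_{i=1}^n f_i$. Let $W=(w_{ij})\in\mathbb{R}^{n\times n}$ be nonnegative, symmetric, with $W\mathbf 1=\mathbf 1$, compliant with an undirected connected graph on $[n]$ (for $i\ne j$, $w_{ij}>0$ iff $\{i,j\}$ is an edge); $\rho_w$ is the spectral norm of $W-\frac1n\mathbf 1\mathbf 1^\intercal$ (so $\rho_w<1$). The D-RR algorithm: given initial points $x_{i,0}\in\mathbb{R}^p$ and stepsizes $\alpha_t>0$, at each epoch $t=0,1,\dots$ each agent $i$ draws a permutation $(\pi^i_0,\dots,\pi^i_{m-1})$ of $[m]$ uniformly at random, independently across agents and epochs; sets $x^0_{i,t}=x_{i,t}$; for $\ell=0,\dots,m-1$ sets $x^{\ell+1}_{i,t}=\sum_{j=1}^n w_{ij}\big(x^\ell_{j,t}-\alpha_t\nabla f_{j,\pi^j_\ell}(x^\ell_{j,t})\big)$; sets $x_{i,t+1}=x^m_{i,t}$. Notation: $\mathbf{x}_t^\ell\in\mathbb{R}^{n\times p}$ has $i$-th row $(x^\ell_{i,t})^\intercal$; $\bar x_t^\ell=\frac1n\sum_i x^\ell_{i,t}$; $\mathbf 1(\bar x_t^\ell)^\intercal$ is the $n\times p$ matrix all of whose rows equal $(\bar x_t^\ell)^\intercal$;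 $\|\cdot\|$ is Euclidean/Frobenius norm. Nonconvex assumptions: each $f_{i,\ell}$ has $L$-Lipschitz gradient and satisfies $f_{i,\ell}\ge\bar f_{i,\ell}$ for some constant $\bar f_{i,\ell}\in\mathbb{R}$; $\bar f:=\inf_x f(x)$; $A:=2L$; $B^2:=2L\big(\bar f-\frac{1}{mn}\sum_{i,\ell}\bar f_{i,\ell}\big)$. *)

theory Defs
  imports "HOL-Analysis.Analysis"
begin

text \<open>Agents are indexed by a finite type 'n (n = CARD('n)); local variables live in an
  arbitrary Euclidean space 'a (playing the role of R^p). Rows of the n x p matrices are
  functions 'n => 'a; the Frobenius norm squared is the sum of squared row norms.\<close>

definition avg :: "('n::finite \<Rightarrow> 'a::real_vector) \<Rightarrow> 'a" where
  "avg v = (1 / real CARD('n)) *\<^sub>R (\<Sum>i\<in>UNIV. v i)"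

text \<open>Squared Frobenius norm of X - 1 (avg X)^T.\<close>
definition cons_err :: "('n::finite \<Rightarrow> 'a::real_normed_vector) \<Rightarrow> real" where
  "cons_err v = (\<Sum>i\<in>UNIV. (norm (v i - avg v))\<^sup>2)"

definition rho_w :: "real^'n^'n \<Rightarrow> real" where
  "rho_w W = onorm (\<lambda>v::real^'n. (\<chi> i j. W $ i $ j - 1 / real CARD('n)) *v v)"

definition mixing_matrix :: "real^'n::finite^'n \<Rightarrow> bool" where
  "mixing_matrix W \<longleftrightarrow>
     (\<forall>i j. W $ i $ j \<ge> 0) \<and> (\<forall>i j. W $ i $ j = W $ j $ i) \<and>
     (\<forall>i. (\<Sum>j\<in>UNIV. W $ i $ j) = 1) \<and>
     (\<exists>E :: 'n \<Rightarrow> 'n \<Rightarrow> bool.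
        (\<forall>i j. E i j \<longleftrightarrow> E j i) \<and> (\<forall>i. \<not> E i i) \<and>
        (\<forall>i j. E\<^sup>*\<^sup>* i j) \<and>
        (\<forall>i j. i \<noteq> j \<longrightarrow> (W $ i $ j > 0 \<longleftrightarrow> E i j)))"

end

theory Submission
  imports Defs
begin

(* Within an epoch, the consensus error of the iterates contracts by (1 + rho_w^2)/2 per inner step
   up to the energy of the gradients used in that step, and the drift of the averages from the
   epoch's starting average is bounded by the same energy.  L-smoothness bounds this energy by
   the Lyapunov quantity itself plus the local gradients at the starting average, and the lower
   bounds on the f_{i,l} bound the latter by B^2 + A (f - fbar).  For the admissible step sizes the
   Lyapunov quantity re-enters its own bound with a coefficient at most 1/4 and can be absorbed,
   which gives the first estimate; unrolling the contraction over the whole epoch and inserting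
   the energy bound gives the second. *)

lemma lipschitz_gradient_upper_bound:
  fixes f :: "'a::euclidean_space \<Rightarrow> real" and g :: "'a \<Rightarrow> 'a"
  assumes der: "\<And>z. (f has_derivative (\<lambda>h. g z \<bullet> h)) (at z)"
    and lip: "\<And>y z. norm (g y - g z) \<le> L * norm (y - z)"
  shows "f (z + d) \<le> f z + g z \<bullet> d + L / 2 * (norm d)\<^sup>2"
proof -
  define \<phi> where "\<phi> s = f (z + s *\<^sub>R d) - s * (g z \<bullet> d) - L / 2 * s\<^sup>2 * (norm d)\<^sup>2" for s :: real
  have \<phi>_deriv: "(\<phi> has_real_derivative (g (z + s *\<^sub>R d) \<bullet> d - g z \<bullet> d - L * s * (norm d)\<^sup>2)) (at s)"
    for s
  proof -
    have "((\<lambda>s. z + s *\<^sub>R d) has_derivative (\<lambda>h. h *\<^sub>R d)) (at s)"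
      by (auto intro!: derivative_eq_intros)
    from has_derivative_compose[OF this der]
    have "((\<lambda>s. f (z + s *\<^sub>R d)) has_derivative (\<lambda>h. g (z + s *\<^sub>R d) \<bullet> (h *\<^sub>R d))) (at s)"
      by simp
    moreover have "(\<lambda>h. g (z + s *\<^sub>R d) \<bullet> (h *\<^sub>R d)) = (*) (g (z + s *\<^sub>R d) \<bullet> d)"
      by auto
    ultimately have f_deriv: "((\<lambda>s. f (z + s *\<^sub>R d)) has_real_derivative (g (z + s *\<^sub>R d) \<bullet> d)) (at s)"
      by (simp add: has_field_derivative_def)
    show ?thesis
      unfolding \<phi>_def by (rule f_deriv derivative_eq_intros refl | simp)+
  qed
  have "\<phi> 1 \<le> \<phi> 0"
  proof (rule DERIV_nonpos_imp_nonincreasing[of 0 1])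
    fix s :: real
    assume s: "0 \<le> s" "s \<le> 1"
    have "g (z + s *\<^sub>R d) \<bullet> d - g z \<bullet> d \<le> norm (g (z + s *\<^sub>R d) - g z) * norm d"
      by (metis inner_diff_left norm_cauchy_schwarz)
    also have "\<dots> \<le> L * norm (s *\<^sub>R d) * norm d"
      using lip[of "z + s *\<^sub>R d" z] by (simp add: mult_right_mono)
    also have "\<dots> = L * s * (norm d)\<^sup>2"
      using s by (simp add: power2_eq_square)
    finally show "\<exists>y. DERIV \<phi> s :> y \<and> y \<le> 0"
      using \<phi>_deriv[of s] by auto
  qed simp
  then show ?thesis
    unfolding \<phi>_def by simp
qed

lemma power2_norm_gradient_le:
  fixes f :: "'a::euclidean_space \<Rightarrow> real" and g :: "'a \<Rightarrow> 'a"
  assumes der: "\<And>z. (f has_derivative (\<lambda>h. g z \<bullet> h)) (at z)"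
    and lip: "\<And>y z. norm (g y - g z) \<le> L * norm (y - z)"
    and lower: "\<And>z. fb \<le> f z" and L: "L > 0"
  shows "(norm (g z))\<^sup>2 \<le> 2 * L * (f z - fb)"
proof -
  have "fb \<le> f (z + (- (1 / L) *\<^sub>R g z))"
    by (rule lower)
  also have "\<dots> \<le> f z + g z \<bullet> (- (1 / L) *\<^sub>R g z) + L / 2 * (norm (- (1 / L) *\<^sub>R g z))\<^sup>2"
    by (rule lipschitz_gradient_upper_bound[OF der lip])
  also have "\<dots> = f z - (norm (g z))\<^sup>2 / (2 * L)"
    using L by (simp add: power2_norm_eq_inner field_simps) (simp add: power2_eq_square)
  finally have "(norm (g z))\<^sup>2 / (2 * L) \<le> f z - fb"
    by simp
  then show ?thesis
    using L by (simp add: pos_divide_le_eq mult.commute)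
qed

lemma power2_norm_sum_le_card_sum:
  fixes v :: "'b \<Rightarrow> 'a::real_normed_vector"
  shows "(norm (\<Sum>k\<in>K. v k))\<^sup>2 \<le> real (card K) * (\<Sum>k\<in>K. (norm (v k))\<^sup>2)"
proof -
  have "(norm (\<Sum>k\<in>K. v k))\<^sup>2 \<le> (\<Sum>k\<in>K. 1 * norm (v k))\<^sup>2"
    by (simp add: norm_sum power_mono)
  also have "\<dots> \<le> (\<Sum>k\<in>K. 1\<^sup>2) * (\<Sum>k\<in>K. (norm (v k))\<^sup>2)"
    by (rule Cauchy_Schwarz_ineq_sum)
  finally show ?thesis
    by simp
qed

lemma power2_norm_add3_le:
  fixes a b c :: "'a::real_normed_vector"
  shows "(norm (a + b + c))\<^sup>2 \<le> 3 * ((norm a)\<^sup>2 + (norm b)\<^sup>2 + (norm c)\<^sup>2)"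
  using power2_norm_sum_le_card_sum[of "\<lambda>k. [a, b, c] ! k" "{..<3}"]
  by (simp add: numeral_3_eq_3 lessThan_Suc ac_simps)

lemma power2_norm_add_le_weighted:
  fixes a b :: "'a::real_normed_vector"
  assumes q: "0 \<le> q" "q < 1"
  shows "q * (norm (a + b))\<^sup>2 \<le> (1 + q) / 2 * (norm a)\<^sup>2 + 2 / (1 - q) * (norm b)\<^sup>2"
proof -
  define s u where "s = norm a" and "u = norm b"
  have "q * (norm (a + b))\<^sup>2 \<le> q * (s + u)\<^sup>2"
    using q norm_triangle_ineq[of a b] by (intro mult_left_mono power_mono) (auto simp: s_def u_def)
  also have "\<dots> \<le> (1 + q) / 2 * s\<^sup>2 + 2 / (1 - q) * u\<^sup>2"
  proof -
    have "(1 + q) / 2 * s\<^sup>2 + 2 / (1 - q) * u\<^sup>2 - q * (s + u)\<^sup>2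
        = (((1 - q) * s - 2 * q * u)\<^sup>2 + 2 * (1 - q) * (2 + q) * u\<^sup>2) / (2 * (1 - q))"
      using q by (simp add: field_simps power2_eq_square)
    also have "\<dots> \<ge> 0"
      using q by (intro divide_nonneg_nonneg add_nonneg_nonneg mult_nonneg_nonneg) auto
    finally show ?thesis
      by simp
  qed
  finally show ?thesis
    by (simp add: s_def u_def)
qed

lemma unroll_affine_recursion_le:
  fixes e S :: "nat \<Rightarrow> real"
  assumes rec: "\<And>l. l < m \<Longrightarrow> e (Suc l) \<le> r * e l + C * S l"
    and r: "0 \<le> r" "r \<le> 1" and C: "0 \<le> C" and S: "\<And>l. 0 \<le> S l"
  shows "l \<le> m \<Longrightarrow> e l \<le> r ^ l * e 0 + C * (\<Sum>k<l. S k)"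
proof (induction l)
  case (Suc l)
  have "e (Suc l) \<le> r * e l + C * S l"
    using Suc.prems by (intro rec) simp
  also have "\<dots> \<le> r * (r ^ l * e 0 + C * (\<Sum>k<l. S k)) + C * S l"
    using Suc r by (intro add_right_mono mult_left_mono) simp_all
  also have "\<dots> \<le> r ^ Suc l * e 0 + C * (\<Sum>k<Suc l. S k)"
    using r C S mult_left_le_one_le[of "C * (\<Sum>k<l. S k)" r]
    by (simp add: algebra_simps sum_nonneg)
  finally show ?case .
qed simp

lemma sum_power2_norm_matrix_combination_le:
  fixes M :: "real^'n::finite^'n" and Z :: "'n \<Rightarrow> 'a::euclidean_space"
  shows "(\<Sum>i\<in>UNIV. (norm (\<Sum>j\<in>UNIV. M $ i $ j *\<^sub>R Z j))\<^sup>2)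
          \<le> (onorm (\<lambda>v. M *v v))\<^sup>2 * (\<Sum>i\<in>UNIV. (norm (Z i))\<^sup>2)"
proof -
  have power2_norm_Basis: "(norm v)\<^sup>2 = (\<Sum>b\<in>Basis. (v \<bullet> b)\<^sup>2)" for v :: 'a
    unfolding power2_norm_eq_inner by (subst euclidean_inner) (simp add: power2_eq_square)
  have power2_norm_vec: "(norm v)\<^sup>2 = (\<Sum>i\<in>UNIV. (v $ i)\<^sup>2)" for v :: "real^'n"
    unfolding power2_norm_eq_inner inner_vec_def by (simp add: power2_eq_square)
  have bl: "bounded_linear (\<lambda>v. M *v v)"
    by (simp add: linear_linear matrix_vector_mul_linear)
  define \<rho> where "\<rho> = onorm (\<lambda>v. M *v v)"
  define Zb where "Zb b = (\<chi> j. Z j \<bullet> b)" for b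
  \<comment> \<open>the mixing acts coordinatewise: column b of the combination is M applied to column b of Z\<close>
  have coord: "(\<Sum>j\<in>UNIV. M $ i $ j *\<^sub>R Z j) \<bullet> b = (M *v Zb b) $ i" for i b
    by (simp add: Zb_def matrix_vector_mult_def inner_sum_left)
  have "(\<Sum>i\<in>UNIV. (norm (\<Sum>j\<in>UNIV. M $ i $ j *\<^sub>R Z j))\<^sup>2) = (\<Sum>b\<in>Basis. (norm (M *v Zb b))\<^sup>2)"
    unfolding power2_norm_vec power2_norm_Basis coord by (rule sum.swap)
  also have "\<dots> \<le> (\<Sum>b\<in>Basis. \<rho>\<^sup>2 * (norm (Zb b))\<^sup>2)"
  proof (rule sum_mono)
    fix b :: 'a
    have "norm (M *v Zb b) \<le> \<rho> * norm (Zb b)"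
      unfolding \<rho>_def by (rule onorm[OF bl])
    then show "(norm (M *v Zb b))\<^sup>2 \<le> \<rho>\<^sup>2 * (norm (Zb b))\<^sup>2"
      by (metis norm_ge_zero power_mono power_mult_distrib)
  qed
  also have "\<dots> = \<rho>\<^sup>2 * (\<Sum>i\<in>UNIV. (norm (Z i))\<^sup>2)"
    unfolding power2_norm_vec power2_norm_Basis
    by (simp add: sum_distrib_left[symmetric] Zb_def) (rule disjI2, rule sum.swap)
  finally show ?thesis
    unfolding \<rho>_def .
qed

lemma mixing_matrix_row_sum: "mixing_matrix W \<Longrightarrow> (\<Sum>j\<in>UNIV. W $ i $ j) = 1"
  unfolding mixing_matrix_def by blast

lemma mixing_matrix_column_sum: "mixing_matrix W \<Longrightarrow> (\<Sum>i\<in>UNIV. W $ i $ j) = 1"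
  unfolding mixing_matrix_def by (metis (no_types, lifting) sum.cong)

lemma avg_diff_scaleR: "avg (\<lambda>i. X i - a *\<^sub>R Y i) = avg X - a *\<^sub>R avg Y"
  by (simp add: avg_def sum_subtractf scaleR_sum_right[symmetric] algebra_simps)

lemma avg_matrix_combination:
  fixes W :: "real^'n::finite^'n" and Y :: "'n \<Rightarrow> 'a::real_vector"
  assumes col: "\<And>j. (\<Sum>i\<in>UNIV. W $ i $ j) = 1"
  shows "avg (\<lambda>i. \<Sum>j\<in>UNIV. W $ i $ j *\<^sub>R Y j) = avg Y"
proof -
  have "(\<Sum>i\<in>UNIV. \<Sum>j\<in>UNIV. W $ i $ j *\<^sub>R Y j) = (\<Sum>j\<in>UNIV. (\<Sum>i\<in>UNIV. W $ i $ j) *\<^sub>R Y j)"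
    by (subst sum.swap) (simp add: scaleR_sum_left)
  then show ?thesis
    unfolding avg_def col by simp
qed

lemma power2_norm_avg_le:
  fixes Y :: "'n::finite \<Rightarrow> 'a::real_normed_vector"
  shows "(norm (avg Y))\<^sup>2 \<le> (\<Sum>i\<in>UNIV. (norm (Y i))\<^sup>2) / real CARD('n)"
proof -
  have "(norm (avg Y))\<^sup>2 = (norm (\<Sum>i\<in>UNIV. Y i))\<^sup>2 / (real CARD('n))\<^sup>2"
    by (simp add: avg_def power_divide)
  also have "\<dots> \<le> real CARD('n) * (\<Sum>i\<in>UNIV. (norm (Y i))\<^sup>2) / (real CARD('n))\<^sup>2"
    by (intro divide_right_mono power2_norm_sum_le_card_sum) simp
  finally show ?thesis
    by (simp add: power2_eq_square)
qed

lemma cons_err_le_sum_power2_norm: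
  fixes Y :: "'n::finite \<Rightarrow> 'a::real_inner"
  shows "cons_err Y \<le> (\<Sum>i\<in>UNIV. (norm (Y i))\<^sup>2)"
proof -
  define a where "a = avg Y"
  have sum_Y: "(\<Sum>i\<in>UNIV. Y i) = real CARD('n) *\<^sub>R a"
    by (simp add: a_def avg_def)
  have "cons_err Y = (\<Sum>i\<in>UNIV. (norm (Y i))\<^sup>2 - 2 * (Y i \<bullet> a) + (norm a)\<^sup>2)"
    unfolding cons_err_def a_def[symmetric]
    by (rule sum.cong) (simp_all add: power2_norm_eq_inner inner_diff_left inner_diff_right inner_commute)
  also have "\<dots> = (\<Sum>i\<in>UNIV. (norm (Y i))\<^sup>2) - 2 * ((\<Sum>i\<in>UNIV. Y i) \<bullet> a) + real CARD('n) * (norm a)\<^sup>2"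
    by (simp add: sum.distrib sum_subtractf inner_sum_left sum_distrib_left)
  also have "\<dots> = (\<Sum>i\<in>UNIV. (norm (Y i))\<^sup>2) - real CARD('n) * (norm a)\<^sup>2"
    by (simp add: sum_Y power2_norm_eq_inner)
  finally show ?thesis
    by simp
qed

lemma cons_err_matrix_combination_le:
  fixes W :: "real^'n::finite^'n" and Y :: "'n \<Rightarrow> 'a::euclidean_space"
  assumes row: "\<And>i. (\<Sum>j\<in>UNIV. W $ i $ j) = 1" and col: "\<And>j. (\<Sum>i\<in>UNIV. W $ i $ j) = 1"
  shows "cons_err (\<lambda>i. \<Sum>j\<in>UNIV. W $ i $ j *\<^sub>R Y j) \<le> (rho_w W)\<^sup>2 * cons_err Y"
proof -
  define M :: "real^'n^'n" where "M = (\<chi> i j. W $ i $ j - 1 / real CARD('n))"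
  have centered: "(\<Sum>j\<in>UNIV. W $ i $ j *\<^sub>R Y j) - avg Y = (\<Sum>j\<in>UNIV. M $ i $ j *\<^sub>R (Y j - avg Y))"
    for i
  proof -
    have M_term: "M $ i $ j *\<^sub>R (Y j - avg Y)
        = W $ i $ j *\<^sub>R Y j - W $ i $ j *\<^sub>R avg Y - (1 / real CARD('n)) *\<^sub>R (Y j - avg Y)" for j
      by (simp add: M_def algebra_simps)
    have "(\<Sum>j\<in>UNIV. M $ i $ j *\<^sub>R (Y j - avg Y))
        = (\<Sum>j\<in>UNIV. W $ i $ j *\<^sub>R Y j) - (\<Sum>j\<in>UNIV. W $ i $ j) *\<^sub>R avg Y
          - (\<Sum>j::'n\<in>UNIV. (1 / real CARD('n)) *\<^sub>R (Y j - avg Y))"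
      by (simp only: M_term sum_subtractf scaleR_sum_left)
    also have "(\<Sum>j::'n\<in>UNIV. (1 / real CARD('n)) *\<^sub>R (Y j - avg Y)) = 0"
      by (simp add: avg_def scaleR_sum_right[symmetric] sum_subtractf sum_constant_scaleR)
    finally show ?thesis
      by (simp add: row)
  qed
  have "cons_err (\<lambda>i. \<Sum>j\<in>UNIV. W $ i $ j *\<^sub>R Y j)
      = (\<Sum>i\<in>UNIV. (norm (\<Sum>j\<in>UNIV. M $ i $ j *\<^sub>R (Y j - avg Y)))\<^sup>2)"
    unfolding cons_err_def avg_matrix_combination[OF col] centered ..
  also have "\<dots> \<le> (rho_w W)\<^sup>2 * cons_err Y"
    using sum_power2_norm_matrix_combination_le[of M "\<lambda>j. Y j - avg Y"]
    unfolding rho_w_def M_def cons_err_def .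
  finally show ?thesis .
qed

lemma cons_err_diff_scaleR_le:
  fixes X G :: "'n::finite \<Rightarrow> 'a::real_inner"
  assumes q: "0 \<le> q" "q < 1"
  shows "q * cons_err (\<lambda>i. X i - \<alpha> *\<^sub>R G i)
    \<le> (1 + q) / 2 * cons_err X + 2 * \<alpha>\<^sup>2 / (1 - q) * (\<Sum>i\<in>UNIV. (norm (G i))\<^sup>2)"
proof -
  have "q * cons_err (\<lambda>i. X i - \<alpha> *\<^sub>R G i)
      = (\<Sum>i\<in>UNIV. q * (norm ((X i - avg X) + (- \<alpha>) *\<^sub>R (G i - avg G)))\<^sup>2)"
    unfolding cons_err_def avg_diff_scaleR sum_distrib_left
    by (simp add: algebra_simps)
  also have "\<dots> \<le> (\<Sum>i\<in>UNIV. (1 + q) / 2 * (norm (X i - avg X))\<^sup>2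
                        + 2 / (1 - q) * (norm ((- \<alpha>) *\<^sub>R (G i - avg G)))\<^sup>2)"
    by (intro sum_mono power2_norm_add_le_weighted q)
  also have "\<dots> = (1 + q) / 2 * cons_err X + 2 * \<alpha>\<^sup>2 / (1 - q) * cons_err G"
    unfolding cons_err_def by (simp add: sum.distrib sum_distrib_left power_mult_distrib mult.assoc)
  also have "\<dots> \<le> (1 + q) / 2 * cons_err X + 2 * \<alpha>\<^sup>2 / (1 - q) * (\<Sum>i\<in>UNIV. (norm (G i))\<^sup>2)"
    using q by (intro add_left_mono mult_left_mono cons_err_le_sum_power2_norm) auto
  finally show ?thesis .
qed

locale drr =
  fixes W :: "real^'n::finite^'n"
    and m :: nat and L \<alpha> :: real
    and fl :: "'n \<Rightarrow> nat \<Rightarrow> 'a::euclidean_space \<Rightarrow> real"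
    and g :: "'n \<Rightarrow> nat \<Rightarrow> 'a \<Rightarrow> 'a"
    and fb :: "'n \<Rightarrow> nat \<Rightarrow> real"
    and \<pi> :: "'n \<Rightarrow> nat \<Rightarrow> nat \<Rightarrow> nat"
    and x :: "nat \<Rightarrow> nat \<Rightarrow> 'n \<Rightarrow> 'a"
  assumes m_pos: "m \<ge> 1"
    and W: "mixing_matrix W"
    and L_pos: "L > 0"
    and grad: "\<And>i l z. l < m \<Longrightarrow> (fl i l has_derivative (\<lambda>h. g i l z \<bullet> h)) (at z)"
    and lip: "\<And>i l y z. l < m \<Longrightarrow> norm (g i l y - g i l z) \<le> L * norm (y - z)"
    and lower: "\<And>i l z. l < m \<Longrightarrow> fl i l z \<ge> fb i l"
    and perm: "\<And>i s. \<pi> i s permutes {..<m}"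
    and step: "\<And>s l i. l < m \<Longrightarrow>
       x s (Suc l) i = (\<Sum>j\<in>UNIV. W $ i $ j *\<^sub>R (x s l j - \<alpha> *\<^sub>R g j (\<pi> j s l) (x s l j)))"
    and \<alpha>_pos: "0 < \<alpha>"
    and \<alpha>_le: "\<alpha> \<le> min (1 / (2 * sqrt 6 * real m * L)) ((1 - (rho_w W)\<^sup>2) / (4 * sqrt 6 * L))"
begin

definition F :: "'a \<Rightarrow> real" where
  "F z = (1 / real CARD('n)) * (\<Sum>i\<in>UNIV. (1 / real m) * (\<Sum>l<m. fl i l z))"

definition gradF :: "'a \<Rightarrow> 'a" where
  "gradF z = (1 / real CARD('n)) *\<^sub>R (\<Sum>i\<in>UNIV. (1 / real m) *\<^sub>R (\<Sum>l<m. g i l z))"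

definition fbar :: real where
  "fbar = (INF z. F z)"

definition Bsq :: real where
  "Bsq = 2 * L * (fbar - (1 / (real m * real CARD('n))) * (\<Sum>i\<in>UNIV. \<Sum>l<m. fb i l))"

definition xbar :: "nat \<Rightarrow> nat \<Rightarrow> 'a" where
  "xbar t l = avg (x t l)"

definition sgrad :: "nat \<Rightarrow> nat \<Rightarrow> 'n \<Rightarrow> 'a" where
  "sgrad t l i = g i (\<pi> i t l) (x t l i)"

definition sgrad_energy :: "nat \<Rightarrow> real" where
  "sgrad_energy t = (\<Sum>l<m. \<Sum>i\<in>UNIV. (norm (sgrad t l i))\<^sup>2)"

definition Lyap :: "nat \<Rightarrow> real" where
  "Lyap t = (1 / real CARD('n)) * (\<Sum>l<m. cons_err (x t l))
            + (\<Sum>l<m. (norm (xbar t l - xbar t 0))\<^sup>2)"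

lemma rho_sq_less_1: "(rho_w W)\<^sup>2 < 1"
proof -
  \<comment> \<open>not derived from connectivity of the graph: a positive admissible step size forces it\<close>
  have "\<alpha> \<le> (1 - (rho_w W)\<^sup>2) / (4 * sqrt 6 * L)"
    using \<alpha>_le by simp
  then have "0 < (1 - (rho_w W)\<^sup>2) / (4 * sqrt 6 * L)"
    using \<alpha>_pos by linarith
  moreover have "0 < 4 * sqrt 6 * L"
    using L_pos by simp
  ultimately show ?thesis
    by (simp add: zero_less_divide_iff)
qed

lemma step_size_absorbs: "3 * L\<^sup>2 * (\<alpha>\<^sup>2 * real m * (2 / (1 - (rho_w W)\<^sup>2) + real m)) \<le> 1 / 4"
proof -
  define q where "q = (rho_w W)\<^sup>2"
  have q: "q < 1" and m: "real m \<ge> 1"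
    using rho_sq_less_1 m_pos by (simp_all add: q_def)
  have \<alpha>1: "\<alpha> \<le> 1 / (2 * sqrt 6 * real m * L)" and \<alpha>2: "\<alpha> \<le> (1 - q) / (4 * sqrt 6 * L)"
    using \<alpha>_le by (simp_all add: q_def)
  have "\<alpha>\<^sup>2 \<le> 1 / (2 * sqrt 6 * real m * L) * ((1 - q) / (4 * sqrt 6 * L))"
    unfolding power2_eq_square using \<alpha>1 \<alpha>2 \<alpha>_pos L_pos m by (intro mult_mono) auto
  then have "\<alpha>\<^sup>2 * real m * (2 / (1 - q)) \<le> 1 / (24 * L\<^sup>2)"
    using q m L_pos by (simp add: field_simps power2_eq_square)
  moreover have "\<alpha>\<^sup>2 \<le> (1 / (2 * sqrt 6 * real m * L))\<^sup>2"
    using \<alpha>1 \<alpha>_pos by (intro power_mono) auto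
  then have "\<alpha>\<^sup>2 * real m * real m \<le> 1 / (24 * L\<^sup>2)"
    using m L_pos by (simp add: field_simps power2_eq_square)
  moreover have "1 / (24 * L\<^sup>2) + 1 / (24 * L\<^sup>2) = 1 / (12 * L\<^sup>2)"
    by simp
  ultimately have "\<alpha>\<^sup>2 * real m * (2 / (1 - q) + real m) \<le> 1 / (12 * L\<^sup>2)"
    unfolding distrib_left by (simp add: mult.assoc)
  then have "3 * L\<^sup>2 * (\<alpha>\<^sup>2 * real m * (2 / (1 - q) + real m)) \<le> 3 * L\<^sup>2 * (1 / (12 * L\<^sup>2))"
    by (intro mult_left_mono) auto
  then show ?thesis
    using L_pos by (simp add: q_def)
qed

lemma x_Suc: "l < m \<Longrightarrow> x t (Suc l) = (\<lambda>i. \<Sum>j\<in>UNIV. W $ i $ j *\<^sub>R (x t l j - \<alpha> *\<^sub>R sgrad t l j))"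
  by (simp add: step sgrad_def fun_eq_iff)

lemma cons_err_Suc_le:
  assumes "l < m"
  shows "cons_err (x t (Suc l)) \<le> (1 + (rho_w W)\<^sup>2) / 2 * cons_err (x t l)
           + 2 * \<alpha>\<^sup>2 / (1 - (rho_w W)\<^sup>2) * (\<Sum>i\<in>UNIV. (norm (sgrad t l i))\<^sup>2)"
proof -
  have "cons_err (x t (Suc l)) \<le> (rho_w W)\<^sup>2 * cons_err (\<lambda>j. x t l j - \<alpha> *\<^sub>R sgrad t l j)"
    unfolding x_Suc[OF assms]
    by (intro cons_err_matrix_combination_le mixing_matrix_row_sum mixing_matrix_column_sum W)
  also have "\<dots> \<le> (1 + (rho_w W)\<^sup>2) / 2 * cons_err (x t l)
           + 2 * \<alpha>\<^sup>2 / (1 - (rho_w W)\<^sup>2) * (\<Sum>i\<in>UNIV. (norm (sgrad t l i))\<^sup>2)"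
    using cons_err_diff_scaleR_le[of "(rho_w W)\<^sup>2" "x t l" \<alpha> "sgrad t l"] rho_sq_less_1 by simp
  finally show ?thesis .
qed

lemma cons_err_le:
  "l \<le> m \<Longrightarrow> cons_err (x t l) \<le> ((1 + (rho_w W)\<^sup>2) / 2) ^ l * cons_err (x t 0)
     + 2 * \<alpha>\<^sup>2 / (1 - (rho_w W)\<^sup>2) * (\<Sum>k<l. \<Sum>i\<in>UNIV. (norm (sgrad t k i))\<^sup>2)"
  by (rule unroll_affine_recursion_le[where e = "\<lambda>l. cons_err (x t l)"])
    (use cons_err_Suc_le rho_sq_less_1 in \<open>auto simp: sum_nonneg\<close>)

lemma xbar_Suc: "l < m \<Longrightarrow> xbar t (Suc l) = xbar t l - \<alpha> *\<^sub>R avg (sgrad t l)"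
  unfolding xbar_def x_Suc avg_matrix_combination[OF mixing_matrix_column_sum[OF W]] avg_diff_scaleR ..

lemma xbar_drift: "l \<le> m \<Longrightarrow> xbar t l - xbar t 0 = - (\<alpha> *\<^sub>R (\<Sum>k<l. avg (sgrad t k)))"
proof (induction l)
  case (Suc l)
  then have "xbar t (Suc l) - xbar t 0 = (xbar t l - xbar t 0) - \<alpha> *\<^sub>R avg (sgrad t l)"
    by (simp add: xbar_Suc)
  with Suc show ?case
    by (simp add: scaleR_add_right)
qed simp

lemma power2_norm_xbar_drift_le:
  assumes "l \<le> m"
  shows "(norm (xbar t l - xbar t 0))\<^sup>2
           \<le> \<alpha>\<^sup>2 * real l / real CARD('n) * (\<Sum>k<l. \<Sum>i\<in>UNIV. (norm (sgrad t k i))\<^sup>2)"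
proof -
  have "(norm (xbar t l - xbar t 0))\<^sup>2 = \<alpha>\<^sup>2 * (norm (\<Sum>k<l. avg (sgrad t k)))\<^sup>2"
    using assms by (simp add: xbar_drift power_mult_distrib)
  also have "\<dots> \<le> \<alpha>\<^sup>2 * (real l * (\<Sum>k<l. (norm (avg (sgrad t k)))\<^sup>2))"
    using power2_norm_sum_le_card_sum[of "\<lambda>k. avg (sgrad t k)" "{..<l}"] by (intro mult_left_mono) auto
  also have "\<dots> \<le> \<alpha>\<^sup>2 * (real l * (\<Sum>k<l. (\<Sum>i\<in>UNIV. (norm (sgrad t k i))\<^sup>2) / real CARD('n)))"
    by (intro mult_left_mono sum_mono power2_norm_avg_le) auto
  also have "\<dots> = \<alpha>\<^sup>2 * real l / real CARD('n) * (\<Sum>k<l. \<Sum>i\<in>UNIV. (norm (sgrad t k i))\<^sup>2)"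
    by (simp add: sum_divide_distrib[symmetric])
  finally show ?thesis .
qed

lemma power2_norm_grad_diff_le:
  "l < m \<Longrightarrow> (norm (g i l y - g i l z))\<^sup>2 \<le> L\<^sup>2 * (norm (y - z))\<^sup>2"
  using lip[of l i y z] by (metis norm_ge_zero power_mono power_mult_distrib)

lemma sum_power2_norm_sgrad_le:
  assumes "l < m"
  shows "(\<Sum>i\<in>UNIV. (norm (sgrad t l i))\<^sup>2)
           \<le> 3 * L\<^sup>2 * cons_err (x t l) + 3 * L\<^sup>2 * real CARD('n) * (norm (xbar t l - xbar t 0))\<^sup>2
             + 3 * (\<Sum>i\<in>UNIV. (norm (g i (\<pi> i t l) (xbar t 0)))\<^sup>2)"
proof -
  have "(norm (sgrad t l i))\<^sup>2 \<le> 3 * (L\<^sup>2 * (norm (x t l i - xbar t l))\<^sup>2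
          + L\<^sup>2 * (norm (xbar t l - xbar t 0))\<^sup>2 + (norm (g i (\<pi> i t l) (xbar t 0)))\<^sup>2)" for i
  proof -
    define j where "j = \<pi> i t l"
    have j: "j < m"
      using permutes_in_image[OF perm[of i t]] assms by (simp add: j_def)
    have "sgrad t l i = (g i j (x t l i) - g i j (xbar t l)) + (g i j (xbar t l) - g i j (xbar t 0))
                         + g i j (xbar t 0)"
      by (simp add: sgrad_def j_def)
    then have "(norm (sgrad t l i))\<^sup>2 \<le> 3 * ((norm (g i j (x t l i) - g i j (xbar t l)))\<^sup>2
                 + (norm (g i j (xbar t l) - g i j (xbar t 0)))\<^sup>2 + (norm (g i j (xbar t 0)))\<^sup>2)"
      by (metis power2_norm_add3_le)
    also have "\<dots> \<le> 3 * (L\<^sup>2 * (norm (x t l i - xbar t l))\<^sup>2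
                 + L\<^sup>2 * (norm (xbar t l - xbar t 0))\<^sup>2 + (norm (g i j (xbar t 0)))\<^sup>2)"
      using j by (intro mult_left_mono add_mono power2_norm_grad_diff_le) auto
    finally show ?thesis
      by (simp add: j_def)
  qed
  then have "(\<Sum>i\<in>UNIV. (norm (sgrad t l i))\<^sup>2)
      \<le> (\<Sum>i\<in>UNIV. 3 * (L\<^sup>2 * (norm (x t l i - xbar t l))\<^sup>2
          + L\<^sup>2 * (norm (xbar t l - xbar t 0))\<^sup>2 + (norm (g i (\<pi> i t l) (xbar t 0)))\<^sup>2))"
    by (rule sum_mono)
  also have "\<dots> = 3 * L\<^sup>2 * cons_err (x t l) + 3 * L\<^sup>2 * real CARD('n) * (norm (xbar t l - xbar t 0))\<^sup>2
             + 3 * (\<Sum>i\<in>UNIV. (norm (g i (\<pi> i t l) (xbar t 0)))\<^sup>2)"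
    by (simp add: cons_err_def xbar_def sum.distrib sum_distrib_left algebra_simps)
  finally show ?thesis .
qed

lemma F_eq: "F z = (\<Sum>i\<in>UNIV. \<Sum>l<m. fl i l z) / (real m * real CARD('n))"
  by (simp add: F_def sum_divide_distrib[symmetric])

lemma lower_avg_le_F: "(\<Sum>i\<in>UNIV. \<Sum>l<m. fb i l) / (real m * real CARD('n)) \<le> F z"
  unfolding F_eq using lower by (intro divide_right_mono sum_mono) auto

lemma fbar_le_F: "fbar \<le> F z"
  unfolding fbar_def using lower_avg_le_F by (intro cINF_lower bdd_belowI) auto

lemma Bsq_nonneg: "0 \<le> Bsq"
proof -
  have "(\<Sum>i\<in>UNIV. \<Sum>l<m. fb i l) / (real m * real CARD('n)) \<le> fbar"
    unfolding fbar_def using lower_avg_le_F by (intro cINF_greatest) auto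
  then show ?thesis
    using L_pos by (simp add: Bsq_def)
qed

(* The (A, B)-condition of the paper, with A = 2 L. *)
lemma sum_power2_norm_grad_le:
  "(\<Sum>i\<in>UNIV. \<Sum>l<m. (norm (g i l z))\<^sup>2) \<le> real CARD('n) * real m * (Bsq + 2 * L * (F z - fbar))"
proof -
  have "(\<Sum>i\<in>UNIV. \<Sum>l<m. (norm (g i l z))\<^sup>2) \<le> (\<Sum>i\<in>UNIV. \<Sum>l<m. 2 * L * (fl i l z - fb i l))"
    using power2_norm_gradient_le[OF grad lip lower L_pos] by (intro sum_mono) auto
  also have "\<dots> = 2 * L * (real m * real CARD('n) * F z - (\<Sum>i\<in>UNIV. \<Sum>l<m. fb i l))"
    using m_pos by (simp add: F_eq sum_subtractf flip: sum_distrib_left right_diff_distrib)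
  also have "\<dots> = real CARD('n) * real m * (Bsq + 2 * L * (F z - fbar))"
    using m_pos by (simp add: Bsq_def field_simps)
  finally show ?thesis .
qed

lemma sgrad_energy_le:
  "sgrad_energy t \<le> 3 * L\<^sup>2 * real CARD('n) * Lyap t
     + 3 * real CARD('n) * real m * (Bsq + 2 * L * (F (xbar t 0) - fbar))"
proof -
  \<comment> \<open>in every epoch each agent visits each of its component functions exactly once\<close>
  have perm_sum: "(\<Sum>l<m. \<Sum>i\<in>UNIV. (norm (g i (\<pi> i t l) z))\<^sup>2) = (\<Sum>i\<in>UNIV. \<Sum>l<m. (norm (g i l z))\<^sup>2)"
    for z
  proof -
    have "(\<Sum>l<m. (norm (g i (\<pi> i t l) z))\<^sup>2) = (\<Sum>l<m. (norm (g i l z))\<^sup>2)" for i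
      using sum.permute[OF perm[of i t], of "\<lambda>l. (norm (g i l z))\<^sup>2"] by (simp add: comp_def)
    then show ?thesis
      by (subst sum.swap) simp
  qed
  have "sgrad_energy t \<le> (\<Sum>l<m. 3 * L\<^sup>2 * cons_err (x t l)
          + 3 * L\<^sup>2 * real CARD('n) * (norm (xbar t l - xbar t 0))\<^sup>2
          + 3 * (\<Sum>i\<in>UNIV. (norm (g i (\<pi> i t l) (xbar t 0)))\<^sup>2))"
    unfolding sgrad_energy_def by (intro sum_mono sum_power2_norm_sgrad_le) simp
  also have "\<dots> = 3 * L\<^sup>2 * (\<Sum>l<m. cons_err (x t l))
          + 3 * L\<^sup>2 * real CARD('n) * (\<Sum>l<m. (norm (xbar t l - xbar t 0))\<^sup>2)
          + 3 * (\<Sum>l<m. \<Sum>i\<in>UNIV. (norm (g i (\<pi> i t l) (xbar t 0)))\<^sup>2)"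
    by (simp only: sum.distrib sum_distrib_left)
  also have "\<dots> = 3 * L\<^sup>2 * real CARD('n) * Lyap t
          + 3 * (\<Sum>i\<in>UNIV. \<Sum>l<m. (norm (g i l (xbar t 0)))\<^sup>2)"
    by (simp add: Lyap_def perm_sum algebra_simps)
  also have "\<dots> \<le> 3 * L\<^sup>2 * real CARD('n) * Lyap t
          + 3 * real CARD('n) * real m * (Bsq + 2 * L * (F (xbar t 0) - fbar))"
    using sum_power2_norm_grad_le[of "xbar t 0"] by simp
  finally show ?thesis .
qed

lemma Lyap_nonneg: "0 \<le> Lyap t"
  by (simp add: Lyap_def cons_err_def sum_nonneg)

lemma sum_cons_err_le:
  "(\<Sum>l<m. cons_err (x t l)) \<le> 2 / (1 - (rho_w W)\<^sup>2) * cons_err (x t 0)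
     + real m * (2 * \<alpha>\<^sup>2 / (1 - (rho_w W)\<^sup>2)) * sgrad_energy t"
proof -
  define r where "r = (1 + (rho_w W)\<^sup>2) / 2"
  have r: "0 \<le> r" "r < 1"
    using rho_sq_less_1 by (simp_all add: r_def)
  have "(\<Sum>l<m. cons_err (x t l))
      \<le> (\<Sum>l<m. r ^ l * cons_err (x t 0) + 2 * \<alpha>\<^sup>2 / (1 - (rho_w W)\<^sup>2) * sgrad_energy t)"
  proof (rule sum_mono)
    fix l
    assume "l \<in> {..<m}"
    then have "l \<le> m"
      by simp
    then have "cons_err (x t l) \<le> r ^ l * cons_err (x t 0)
        + 2 * \<alpha>\<^sup>2 / (1 - (rho_w W)\<^sup>2) * (\<Sum>k<l. \<Sum>i\<in>UNIV. (norm (sgrad t k i))\<^sup>2)"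
      unfolding r_def by (rule cons_err_le)
    also have "\<dots> \<le> r ^ l * cons_err (x t 0) + 2 * \<alpha>\<^sup>2 / (1 - (rho_w W)\<^sup>2) * sgrad_energy t"
      unfolding sgrad_energy_def using \<open>l \<le> m\<close> rho_sq_less_1
      by (intro add_left_mono mult_left_mono sum_mono2) (auto simp: sum_nonneg)
    finally show "cons_err (x t l) \<le> r ^ l * cons_err (x t 0) + 2 * \<alpha>\<^sup>2 / (1 - (rho_w W)\<^sup>2) * sgrad_energy t" .
  qed
  also have "\<dots> = (\<Sum>l<m. r ^ l) * cons_err (x t 0) + real m * (2 * \<alpha>\<^sup>2 / (1 - (rho_w W)\<^sup>2)) * sgrad_energy t"
    by (simp add: sum.distrib sum_distrib_right)
  also have "\<dots> \<le> 2 / (1 - (rho_w W)\<^sup>2) * cons_err (x t 0)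
                  + real m * (2 * \<alpha>\<^sup>2 / (1 - (rho_w W)\<^sup>2)) * sgrad_energy t"
  proof -
    have "(\<Sum>l<m. r ^ l) = (1 - r ^ m) / (1 - r)"
      using r by (simp add: sum_gp_strict)
    also have "\<dots> \<le> 1 / (1 - r)"
      using r by (intro divide_right_mono) auto
    also have "\<dots> = 2 / (1 - (rho_w W)\<^sup>2)"
      using rho_sq_less_1 by (simp add: r_def field_simps)
    finally show ?thesis
      by (intro add_right_mono mult_right_mono) (simp_all add: cons_err_def sum_nonneg)
  qed
  finally show ?thesis .
qed

lemma sum_power2_norm_xbar_drift_le:
  "(\<Sum>l<m. (norm (xbar t l - xbar t 0))\<^sup>2) \<le> \<alpha>\<^sup>2 * real m * real m / real CARD('n) * sgrad_energy t"
proof -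
  have "(\<Sum>l<m. (norm (xbar t l - xbar t 0))\<^sup>2) \<le> (\<Sum>l<m. \<alpha>\<^sup>2 * real m / real CARD('n) * sgrad_energy t)"
  proof (rule sum_mono)
    fix l
    assume "l \<in> {..<m}"
    then have "l \<le> m"
      by simp
    have "(norm (xbar t l - xbar t 0))\<^sup>2
        \<le> \<alpha>\<^sup>2 * real l / real CARD('n) * (\<Sum>k<l. \<Sum>i\<in>UNIV. (norm (sgrad t k i))\<^sup>2)"
      using \<open>l \<le> m\<close> by (rule power2_norm_xbar_drift_le)
    also have "\<dots> \<le> \<alpha>\<^sup>2 * real m / real CARD('n) * sgrad_energy t"
      unfolding sgrad_energy_def using \<open>l \<le> m\<close>
      by (intro mult_mono divide_right_mono mult_left_mono sum_mono2) (auto simp: sum_nonneg)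
    finally show "(norm (xbar t l - xbar t 0))\<^sup>2 \<le> \<alpha>\<^sup>2 * real m / real CARD('n) * sgrad_energy t" .
  qed
  then show ?thesis
    by (simp add: algebra_simps)
qed

lemma Lyap_le_sgrad_energy:
  "Lyap t \<le> 2 / (real CARD('n) * (1 - (rho_w W)\<^sup>2)) * cons_err (x t 0)
     + \<alpha>\<^sup>2 * real m * (2 / (1 - (rho_w W)\<^sup>2) + real m) / real CARD('n) * sgrad_energy t"
proof -
  have "Lyap t \<le> 1 / real CARD('n) * (2 / (1 - (rho_w W)\<^sup>2) * cons_err (x t 0)
          + real m * (2 * \<alpha>\<^sup>2 / (1 - (rho_w W)\<^sup>2)) * sgrad_energy t)
        + \<alpha>\<^sup>2 * real m * real m / real CARD('n) * sgrad_energy t"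
    unfolding Lyap_def
    by (intro add_mono mult_left_mono sum_cons_err_le sum_power2_norm_xbar_drift_le) simp
  also have "\<dots> = 2 / (real CARD('n) * (1 - (rho_w W)\<^sup>2)) * cons_err (x t 0)
     + \<alpha>\<^sup>2 * real m * (2 / (1 - (rho_w W)\<^sup>2) + real m) / real CARD('n) * sgrad_energy t"
    by (simp add: add_divide_distrib diff_divide_distrib algebra_simps)
  finally show ?thesis .
qed

lemma A_gap_nonneg: "0 \<le> 2 * L * (F z - fbar)"
  using fbar_le_F[of z] L_pos by simp

lemma Lyap_le:
  "Lyap t \<le> 4 / (real CARD('n) * (1 - (rho_w W)\<^sup>2)) * cons_err (x t 0)
     + 4 * \<alpha>\<^sup>2 * (real m)\<^sup>2 * (2 / (1 - (rho_w W)\<^sup>2) + real m) * (Bsq + 2 * L * (F (xbar t 0) - fbar))"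
proof -
  define \<kappa> where "\<kappa> = \<alpha>\<^sup>2 * real m * (2 / (1 - (rho_w W)\<^sup>2) + real m)"
  define K where "K = Bsq + 2 * L * (F (xbar t 0) - fbar)"
  define P where "P = 2 / (real CARD('n) * (1 - (rho_w W)\<^sup>2)) * cons_err (x t 0)"
  have \<kappa>: "0 \<le> \<kappa>"
    using rho_sq_less_1 by (simp add: \<kappa>_def)
  have P: "0 \<le> P"
    using rho_sq_less_1 by (simp add: P_def cons_err_def sum_nonneg)
  have K: "0 \<le> K"
    using Bsq_nonneg A_gap_nonneg by (simp add: K_def)
  have "Lyap t \<le> P + \<kappa> / real CARD('n) * sgrad_energy t"
    using Lyap_le_sgrad_energy by (simp add: \<kappa>_def P_def)
  also have "\<dots> \<le> P + \<kappa> / real CARD('n) * (3 * L\<^sup>2 * real CARD('n) * Lyap t + 3 * real CARD('n) * real m * K)"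
    using sgrad_energy_le \<kappa> by (intro add_left_mono mult_left_mono) (simp_all add: K_def)
  also have "\<dots> = P + 3 * L\<^sup>2 * \<kappa> * Lyap t + 3 * \<kappa> * real m * K"
    by (simp add: field_simps)
  finally have "Lyap t \<le> P + 3 * L\<^sup>2 * \<kappa> * Lyap t + 3 * \<kappa> * real m * K" .
  \<comment> \<open>the step size makes the feedback of the Lyapunov quantity through the gradients a contraction\<close>
  moreover have "3 * L\<^sup>2 * \<kappa> * Lyap t \<le> 1 / 4 * Lyap t"
    using step_size_absorbs Lyap_nonneg unfolding \<kappa>_def by (rule mult_right_mono)
  ultimately have "Lyap t \<le> 2 * P + 4 * (\<kappa> * real m * K)"
    using P \<kappa> K by linarith
  then show ?thesis
    by (simp add: P_def \<kappa>_def K_def power2_eq_square algebra_simps)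
qed

lemma Lyap_bound:
  "Lyap t \<le> 4 / (real CARD('n) * (1 - (rho_w W)\<^sup>2)) * cons_err (x t 0)
     + 6 * (real m)\<^sup>2 * \<alpha>\<^sup>2 * Bsq * (real m + 4) / (1 - (rho_w W)\<^sup>2)\<^sup>2
     + 6 * \<alpha>\<^sup>2 * real m * (4 + (real m)\<^sup>2) / (1 - (rho_w W)\<^sup>2)\<^sup>2 * (norm (gradF (xbar t 0)))\<^sup>2
     + 12 * (real m)\<^sup>2 * \<alpha>\<^sup>2 * (2 * L) * (4 + real m) / (1 - (rho_w W)\<^sup>2) * (F (xbar t 0) - fbar)"
proof -
  define u where "u = 1 / (1 - (rho_w W)\<^sup>2)"
  define D where "D = 2 * L * (F (xbar t 0) - fbar)"
  have u: "1 \<le> u"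
    using rho_sq_less_1 by (simp add: u_def)
  have "1 \<le> u\<^sup>2"
    using u by (rule one_le_power)
  then have "u \<le> u\<^sup>2" "real m \<le> real m * u\<^sup>2" "real m \<le> real m * u"
    using u by (simp_all add: power2_eq_square mult_le_cancel_left1)
  then have coeff_B: "4 * (2 * u + real m) \<le> 6 * (real m + 4) * u\<^sup>2"
    and coeff_D: "4 * (2 * u + real m) \<le> 12 * (4 + real m) * u"
    using u by (simp_all add: algebra_simps)
  have "Lyap t \<le> 4 / (real CARD('n) * (1 - (rho_w W)\<^sup>2)) * cons_err (x t 0)
      + \<alpha>\<^sup>2 * (real m)\<^sup>2 * (4 * (2 * u + real m)) * Bsq + \<alpha>\<^sup>2 * (real m)\<^sup>2 * (4 * (2 * u + real m)) * D"
  proof -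
    have "4 * \<alpha>\<^sup>2 * (real m)\<^sup>2 * (2 / (1 - (rho_w W)\<^sup>2) + real m) * (Bsq + D)
        = \<alpha>\<^sup>2 * (real m)\<^sup>2 * (4 * (2 * u + real m)) * Bsq + \<alpha>\<^sup>2 * (real m)\<^sup>2 * (4 * (2 * u + real m)) * D"
      by (simp add: u_def algebra_simps add_divide_distrib)
    then show ?thesis
      using Lyap_le[of t] unfolding D_def[symmetric] by simp
  qed
  also have "\<dots> \<le> 4 / (real CARD('n) * (1 - (rho_w W)\<^sup>2)) * cons_err (x t 0)
      + \<alpha>\<^sup>2 * (real m)\<^sup>2 * (6 * (real m + 4) * u\<^sup>2) * Bsq + \<alpha>\<^sup>2 * (real m)\<^sup>2 * (12 * (4 + real m) * u) * D"
    using Bsq_nonneg A_gap_nonneg unfolding D_def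
    by (intro add_mono order_refl mult_right_mono mult_left_mono coeff_B coeff_D) simp_all
  also have "\<dots> = 4 / (real CARD('n) * (1 - (rho_w W)\<^sup>2)) * cons_err (x t 0)
     + 6 * (real m)\<^sup>2 * \<alpha>\<^sup>2 * Bsq * (real m + 4) / (1 - (rho_w W)\<^sup>2)\<^sup>2
     + 12 * (real m)\<^sup>2 * \<alpha>\<^sup>2 * (2 * L) * (4 + real m) / (1 - (rho_w W)\<^sup>2) * (F (xbar t 0) - fbar)"
    by (simp add: u_def D_def power_divide add_divide_distrib diff_divide_distrib algebra_simps)
  finally have "Lyap t \<le> 4 / (real CARD('n) * (1 - (rho_w W)\<^sup>2)) * cons_err (x t 0)
     + 6 * (real m)\<^sup>2 * \<alpha>\<^sup>2 * Bsq * (real m + 4) / (1 - (rho_w W)\<^sup>2)\<^sup>2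
     + 12 * (real m)\<^sup>2 * \<alpha>\<^sup>2 * (2 * L) * (4 + real m) / (1 - (rho_w W)\<^sup>2) * (F (xbar t 0) - fbar)" .
  moreover have "0 \<le> 6 * \<alpha>\<^sup>2 * real m * (4 + (real m)\<^sup>2) / (1 - (rho_w W)\<^sup>2)\<^sup>2 * (norm (gradF (xbar t 0)))\<^sup>2"
    by simp
  ultimately show ?thesis
    by linarith
qed

lemma cons_err_epoch_bound:
  "cons_err (x t m) \<le> ((1 + (rho_w W)\<^sup>2) / 2) ^ m * cons_err (x t 0)
     + 12 * \<alpha>\<^sup>2 * real CARD('n) * L\<^sup>2 / (1 - (rho_w W)\<^sup>2) * Lyap t
     + 6 * \<alpha>\<^sup>2 * real m * real CARD('n) * Bsq / (1 - (rho_w W)\<^sup>2)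
     + 6 * \<alpha>\<^sup>2 * real m * real CARD('n) / (1 - (rho_w W)\<^sup>2) * (norm (gradF (xbar t 0)))\<^sup>2
     + 12 * (2 * L) * \<alpha>\<^sup>2 * real m * real CARD('n) / (1 - (rho_w W)\<^sup>2) * (F (xbar t 0) - fbar)"
proof -
  define c where "c = \<alpha>\<^sup>2 / (1 - (rho_w W)\<^sup>2)"
  define D where "D = 2 * L * (F (xbar t 0) - fbar)"
  have c: "0 \<le> c"
    using rho_sq_less_1 by (simp add: c_def)
  have "cons_err (x t m) \<le> ((1 + (rho_w W)\<^sup>2) / 2) ^ m * cons_err (x t 0) + 2 * c * sgrad_energy t"
    using cons_err_le[of m t] by (simp add: c_def sgrad_energy_def)
  also have "\<dots> \<le> ((1 + (rho_w W)\<^sup>2) / 2) ^ m * cons_err (x t 0)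
      + 2 * c * (3 * L\<^sup>2 * real CARD('n) * Lyap t + 3 * real CARD('n) * real m * (Bsq + D))"
    using c by (intro add_left_mono mult_left_mono) (simp_all add: D_def sgrad_energy_le)
  also have "\<dots> = ((1 + (rho_w W)\<^sup>2) / 2) ^ m * cons_err (x t 0) + 6 * (c * real CARD('n) * L\<^sup>2 * Lyap t)
      + 6 * (c * real m * real CARD('n) * Bsq) + 6 * (c * real m * real CARD('n) * D)"
    by (simp add: algebra_simps)
  also have "\<dots> \<le> ((1 + (rho_w W)\<^sup>2) / 2) ^ m * cons_err (x t 0)
     + 12 * \<alpha>\<^sup>2 * real CARD('n) * L\<^sup>2 / (1 - (rho_w W)\<^sup>2) * Lyap t
     + 6 * \<alpha>\<^sup>2 * real m * real CARD('n) * Bsq / (1 - (rho_w W)\<^sup>2)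
     + 6 * \<alpha>\<^sup>2 * real m * real CARD('n) / (1 - (rho_w W)\<^sup>2) * (norm (gradF (xbar t 0)))\<^sup>2
     + 12 * (2 * L) * \<alpha>\<^sup>2 * real m * real CARD('n) / (1 - (rho_w W)\<^sup>2) * (F (xbar t 0) - fbar)"
  proof -
    have nonneg: "0 \<le> c * real CARD('n) * L\<^sup>2 * Lyap t" "0 \<le> c * real m * real CARD('n) * D"
      "0 \<le> 6 * \<alpha>\<^sup>2 * real m * real CARD('n) / (1 - (rho_w W)\<^sup>2) * (norm (gradF (xbar t 0)))\<^sup>2"
      using c Lyap_nonneg A_gap_nonneg[of "xbar t 0"] rho_sq_less_1 by (simp_all add: D_def)
    have coeffs: "12 * \<alpha>\<^sup>2 * real CARD('n) * L\<^sup>2 / (1 - (rho_w W)\<^sup>2) * Lyap t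
        = 12 * (c * real CARD('n) * L\<^sup>2 * Lyap t)"
      "6 * \<alpha>\<^sup>2 * real m * real CARD('n) * Bsq / (1 - (rho_w W)\<^sup>2) = 6 * (c * real m * real CARD('n) * Bsq)"
      "12 * (2 * L) * \<alpha>\<^sup>2 * real m * real CARD('n) / (1 - (rho_w W)\<^sup>2) * (F (xbar t 0) - fbar)
        = 12 * (c * real m * real CARD('n) * D)"
      by (simp_all add: c_def D_def)
    show ?thesis
      unfolding coeffs using nonneg by linarith
  qed
  finally show ?thesis .
qed

end

theorem lemma14:
  fixes W :: "real^'n::finite^'n"
    and m :: nat and L \<alpha> :: real
    and fl :: "'n \<Rightarrow> nat \<Rightarrow> 'a::euclidean_space \<Rightarrow> real"
    and g :: "'n \<Rightarrow> nat \<Rightarrow> 'a \<Rightarrow> 'a"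
    and fb :: "'n \<Rightarrow> nat \<Rightarrow> real"
    and \<pi> :: "'n \<Rightarrow> nat \<Rightarrow> nat \<Rightarrow> nat"
    and x :: "nat \<Rightarrow> nat \<Rightarrow> 'n \<Rightarrow> 'a"
    and t :: nat
  assumes m_pos: "m \<ge> 1"
    and W: "mixing_matrix W"
    and L_pos: "L > 0"
    and grad: "\<And>i l z. l < m \<Longrightarrow> (fl i l has_derivative (\<lambda>h. g i l z \<bullet> h)) (at z)"
    and lip: "\<And>i l y z. l < m \<Longrightarrow> norm (g i l y - g i l z) \<le> L * norm (y - z)"
    and lower: "\<And>i l z. l < m \<Longrightarrow> fl i l z \<ge> fb i l"
    and perm: "\<And>i s. \<pi> i s permutes {..<m}"
    and step: "\<And>s l i. l < m \<Longrightarrow>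
       x s (Suc l) i = (\<Sum>j\<in>UNIV. W $ i $ j *\<^sub>R (x s l j - \<alpha> *\<^sub>R g j (\<pi> j s l) (x s l j)))"
    and epoch: "\<And>s. x (Suc s) 0 = x s m"
    and \<alpha>_pos: "0 < \<alpha>"
    and \<alpha>_le: "\<alpha> \<le> min (1 / (2 * sqrt 6 * real m * L)) ((1 - (rho_w W)\<^sup>2) / (4 * sqrt 6 * L))"
  shows
    "let n = real CARD('n); \<rho> = rho_w W;
         F = (\<lambda>z. (1 / n) * (\<Sum>i\<in>UNIV. (1 / real m) * (\<Sum>l<m. fl i l z)));
         gF = (\<lambda>z. (1 / n) *\<^sub>R (\<Sum>i\<in>UNIV. (1 / real m) *\<^sub>R (\<Sum>l<m. g i l z)));
         fbar = (INF z. F z);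
         A = 2 * L;
         B2 = 2 * L * (fbar - (1 / (real m * n)) * (\<Sum>i\<in>UNIV. \<Sum>l<m. fb i l));
         xb = (\<lambda>l. avg (x t l));
         \<L> = (1 / n) * (\<Sum>l<m. cons_err (x t l)) + (\<Sum>l<m. (norm (xb l - xb 0))\<^sup>2)
     in \<L> \<le> 4 / (n * (1 - \<rho>\<^sup>2)) * cons_err (x t 0)
              + 6 * (real m)\<^sup>2 * \<alpha>\<^sup>2 * B2 * (real m + 4) / (1 - \<rho>\<^sup>2)\<^sup>2
              + 6 * \<alpha>\<^sup>2 * real m * (4 + (real m)\<^sup>2) / (1 - \<rho>\<^sup>2)\<^sup>2 * (norm (gF (xb 0)))\<^sup>2
              + 12 * (real m)\<^sup>2 * \<alpha>\<^sup>2 * A * (4 + real m) / (1 - \<rho>\<^sup>2) * (F (xb 0) - fbar)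
      \<and> cons_err (x (Suc t) 0) \<le> ((1 + \<rho>\<^sup>2) / 2) ^ m * cons_err (x t 0)
              + 12 * \<alpha>\<^sup>2 * n * L\<^sup>2 / (1 - \<rho>\<^sup>2) * \<L>
              + 6 * \<alpha>\<^sup>2 * real m * n * B2 / (1 - \<rho>\<^sup>2)
              + 6 * \<alpha>\<^sup>2 * real m * n / (1 - \<rho>\<^sup>2) * (norm (gF (xb 0)))\<^sup>2
              + 12 * A * \<alpha>\<^sup>2 * real m * n / (1 - \<rho>\<^sup>2) * (F (xb 0) - fbar)"
proof -
  interpret drr W m L \<alpha> fl g fb \<pi> x
    by (rule drr.intro) (fact assms)+
  show ?thesis
    using Lyap_bound[of t] cons_err_epoch_bound[of t]
    unfolding Let_def epoch F_def gradF_def fbar_def Bsq_def Lyap_def xbar_def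
    by (rule conjI)
qed

end
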